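(* Let $m$ and $m_1$ be positive integers, $n=mm_1+2$, and let $\phi$ be a homogeneous polynomial on $\mathbb{R}^n$ of degree $m$ satisfying $|\nabla\phi(x)|^2=m^2|x|^{2m-2}$ and $\Delta\phi(x)=0$. Let $g$ be a $C^2$ function of one variable. Then $u(x)=g\big(\phi(x)/|x|^m\big)$ is $p$-harmonic if and only if, for some constants $C$ and $\alpha$, $$g'(z)=C(1-z^2)^{-\alpha},\qquad p=1+\frac{m_1}{2\alpha-1}.$$
   Context: The $p$-Laplacian of a $C^2$ function $u$ is $\Delta_p u:=|\nabla u|^2\Delta u+\tfrac{p-2}{2}\nabla u\cdot\nabla|\nabla u|^2$; $u$ is $p$-harmonic if $\Delta_p u=0$. *)

theory Defs
  imports "HOL-Analysis.Analysis"
begin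

definition grad :: "(real^'n \<Rightarrow> real) \<Rightarrow> real^'n \<Rightarrow> real^'n" where
  "grad f x = (\<chi> i. frechet_derivative f (at x) (axis i 1))"

definition partial2 :: "(real^'n \<Rightarrow> real) \<Rightarrow> 'n \<Rightarrow> 'n \<Rightarrow> real^'n \<Rightarrow> real" where
  "partial2 f i j x = frechet_derivative (\<lambda>y. grad f y $ i) (at x) (axis j 1)"

definition laplacian :: "(real^'n \<Rightarrow> real) \<Rightarrow> real^'n \<Rightarrow> real" where
  "laplacian f x = (\<Sum>i\<in>UNIV. partial2 f i i x)"

definition C2_on :: "(real^'n) set \<Rightarrow> (real^'n \<Rightarrow> real) \<Rightarrow> bool" where
  "C2_on S f \<longleftrightarrow> (\<forall>x\<in>S. f differentiable at x) \<and>
     (\<forall>i. \<forall>x\<in>S. (\<lambda>y. grad f y $ i) differentiable at x) \<and>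
     (\<forall>i j. continuous_on S (partial2 f i j))"

definition p_laplacian :: "real \<Rightarrow> (real^'n \<Rightarrow> real) \<Rightarrow> real^'n \<Rightarrow> real" where
  "p_laplacian p u x = (norm (grad u x))\<^sup>2 * laplacian u x
      + (p - 2) / 2 * (grad u x \<bullet> grad (\<lambda>y. (norm (grad u y))\<^sup>2) x)"

definition p_harmonic_on :: "real \<Rightarrow> (real^'n) set \<Rightarrow> (real^'n \<Rightarrow> real) \<Rightarrow> bool" where
  "p_harmonic_on p S u \<longleftrightarrow> C2_on S u \<and> (\<forall>x\<in>S. p_laplacian p u x = 0)"

definition homogeneous_poly :: "nat \<Rightarrow> (real^'n \<Rightarrow> real) \<Rightarrow> bool" where
  "homogeneous_poly m \<phi> \<longleftrightarrow> (\<exists>(A :: ('n \<Rightarrow> nat) set) (c :: ('n \<Rightarrow> nat) \<Rightarrow> real).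
      finite A \<and> (\<forall>a\<in>A. (\<Sum>i\<in>UNIV. a i) = m) \<and>
      (\<forall>x. \<phi> x = (\<Sum>a\<in>A. c a * (\<Prod>i\<in>UNIV. (x $ i) ^ a i))))"

definition C2_real_on :: "real set \<Rightarrow> (real \<Rightarrow> real) \<Rightarrow> bool" where
  "C2_real_on S g \<longleftrightarrow> (\<forall>z\<in>S. g differentiable at z) \<and>
     (\<forall>z\<in>S. deriv g differentiable at z) \<and> continuous_on S (deriv (deriv g))"

end

(*
  Write \<zeta> = \<phi> / |x|^m, so that u = g \<circ> \<zeta>. The eiconal equation and Euler's identity give
  |\<nabla>\<zeta>|\<^sup>2 = m\<^sup>2 (1 - \<zeta>\<^sup>2) / |x|\<^sup>2 and \<nabla>\<zeta> \<bullet> x = 0, and harmonicity of \<phi> gives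
  \<Delta>\<zeta> = -m (n + m - 2) \<zeta> / |x|\<^sup>2. Hence \<Delta>\<^sub>p u is a positive multiple of
  g'(\<zeta>)\<^sup>2 ((p - 1)(1 - \<zeta>\<^sup>2) g''(\<zeta>) - (m\<^sub>1 + p - 1) \<zeta> g'(\<zeta>)), using n = m m\<^sub>1 + 2.
  Since \<zeta> maps the region |\<phi>| < |x|^m onto (-1, 1), u is p-harmonic iff this one-variable
  equation holds on (-1, 1), and its solutions are exactly g' = C (1 - z\<^sup>2) powr (-\<alpha>) with
  2\<alpha> - 1 = m\<^sub>1 / (p - 1).
*)
theory Submission
  imports Defs
begin

lemma real_polynomial_function_has_gradient:
  fixes f :: "real^'n \<Rightarrow> real"
  assumes "real_polynomial_function f"
  shows "\<exists>G. (\<forall>j. real_polynomial_function (\<lambda>x. G x $ j)) \<and>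
             (\<forall>x. (f has_derivative (\<lambda>h. G x \<bullet> h)) (at x))"
  using assms
proof (induction rule: real_polynomial_function.induct)
  case (linear f)
  have "f h = (\<chi> j. f (axis j 1)) \<bullet> h" for h
  proof -
    have "f h = f (\<Sum>j\<in>UNIV. h $ j *\<^sub>R axis j 1)"
      using basis_expansion[of h] by (simp add: scalar_mult_eq_scaleR)
    also have "\<dots> = (\<chi> j. f (axis j 1)) \<bullet> h"
      using linear by (simp add: bounded_linear.linear linear_sum linear_scale inner_vec_def mult.commute)
    finally show ?thesis .
  qed
  then have "(f has_derivative (\<lambda>h. (\<chi> j. f (axis j 1)) \<bullet> h)) (at x)" for x
    using linear bounded_linear_imp_has_derivative by (metis (no_types, lifting) ext)
  then show ?case by (intro exI[of _ "\<lambda>x. \<chi> j. f (axis j 1)"]) auto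
next
  case (const c)
  show ?case by (intro exI[of _ "\<lambda>x. 0"]) auto
next
  case (add f g)
  then obtain F G where
    "\<forall>j. real_polynomial_function (\<lambda>x. F x $ j)" "\<forall>x. (f has_derivative (\<lambda>h. F x \<bullet> h)) (at x)"
    "\<forall>j. real_polynomial_function (\<lambda>x. G x $ j)" "\<forall>x. (g has_derivative (\<lambda>h. G x \<bullet> h)) (at x)"
    by blast
  then show ?case
    by (intro exI[of _ "\<lambda>x. F x + G x"]) (auto intro!: derivative_eq_intros ext simp: inner_add_left)
next
  case (mult f g)
  then obtain F G where
    "\<forall>j. real_polynomial_function (\<lambda>x. F x $ j)" "\<forall>x. (f has_derivative (\<lambda>h. F x \<bullet> h)) (at x)"
    "\<forall>j. real_polynomial_function (\<lambda>x. G x $ j)" "\<forall>x. (g has_derivative (\<lambda>h. G x \<bullet> h)) (at x)"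
    by blast
  with mult.hyps show ?case
    by (intro exI[of _ "\<lambda>x. f x *\<^sub>R G x + g x *\<^sub>R F x"])
      (auto intro!: derivative_eq_intros real_polynomial_function.intros(3,4)
        simp: inner_add_left algebra_simps)
qed

lemma grad_eqI:
  assumes "(f has_derivative (\<lambda>h. D \<bullet> h)) (at x)"
  shows "grad f x = D"
proof -
  have "frechet_derivative f (at x) = (\<lambda>h. D \<bullet> h)"
    using frechet_derivative_at[OF assms] by simp
  then show ?thesis by (simp add: grad_def vec_eq_iff inner_axis)
qed

lemma real_polynomial_function_grad:
  fixes f :: "real^'n \<Rightarrow> real"
  assumes "real_polynomial_function f"
  shows has_derivative_real_polynomial_function: "(f has_derivative (\<lambda>h. grad f x \<bullet> h)) (at x)"
    and real_polynomial_function_grad_component: "real_polynomial_function (\<lambda>x. grad f x $ j)"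
proof -
  obtain G where G: "\<forall>j. real_polynomial_function (\<lambda>x. G x $ j)"
    "\<forall>x. (f has_derivative (\<lambda>h. G x \<bullet> h)) (at x)"
    using real_polynomial_function_has_gradient[OF assms] by blast
  then have "grad f = G" by (auto intro: grad_eqI)
  with G show "(f has_derivative (\<lambda>h. grad f x \<bullet> h)) (at x)"
    and "real_polynomial_function (\<lambda>x. grad f x $ j)" by auto
qed

lemma continuous_on_real_polynomial_function:
  "real_polynomial_function f \<Longrightarrow> continuous_on S f"
  by (simp add: differentiable_imp_continuous_on differentiable_on_real_polynomial_function)

lemma real_polynomial_function_vec_nth [intro]: "real_polynomial_function (\<lambda>x. x $ i)"
  by (rule real_polynomial_function.intros(1)) (rule bounded_linear_vec_nth)

lemma homogeneous_poly_imp_real_polynomial_function: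
  assumes "homogeneous_poly m \<phi>"
  shows "real_polynomial_function \<phi>"
proof -
  obtain A c where "finite A" and \<phi>: "\<phi> = (\<lambda>x. \<Sum>a\<in>A. c a * (\<Prod>i\<in>UNIV. (x $ i) ^ a i))"
    using assms unfolding homogeneous_poly_def by blast
  then show ?thesis by (auto intro!: real_polynomial_function_sum real_polynomial_function.intros(2,4)
      real_polynomial_function_prod real_polynomial_function_power)
qed

lemma homogeneous_poly_scaleR:
  assumes "homogeneous_poly m \<phi>"
  shows "\<phi> (t *\<^sub>R x) = t ^ m * \<phi> x"
proof -
  obtain A c where deg: "\<forall>a\<in>A. (\<Sum>i\<in>UNIV. a i) = m"
    and \<phi>: "\<forall>x. \<phi> x = (\<Sum>a\<in>A. c a * (\<Prod>i\<in>UNIV. (x $ i) ^ a i))"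
    using assms unfolding homogeneous_poly_def by blast
  have "(\<Prod>i\<in>UNIV. ((t *\<^sub>R x) $ i) ^ a i) = t ^ m * (\<Prod>i\<in>UNIV. (x $ i) ^ a i)" if "a \<in> A" for a
  proof -
    have "(\<Prod>i\<in>UNIV. t ^ a i) = t ^ m" using deg that power_sum[of t a UNIV] by simp
    then show ?thesis by (simp add: power_mult_distrib prod.distrib)
  qed
  then show ?thesis using \<phi> by (simp add: sum_distrib_left algebra_simps)
qed

lemma homogeneous_poly_euler:
  assumes "homogeneous_poly m \<phi>"
  shows "grad \<phi> x \<bullet> x = real m * \<phi> x"
proof -
  note d\<phi> = has_derivative_real_polynomial_function[OF homogeneous_poly_imp_real_polynomial_function[OF assms]]
  have "((\<lambda>t. \<phi> (t *\<^sub>R x)) has_derivative (\<lambda>s. grad \<phi> (1 *\<^sub>R x) \<bullet> (s *\<^sub>R x))) (at 1)"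
    by (rule has_derivative_compose[OF _ d\<phi>]) (auto intro!: derivative_eq_intros)
  then have "DERIV (\<lambda>t. \<phi> (t *\<^sub>R x)) 1 :> grad \<phi> x \<bullet> x"
    by (simp add: has_field_derivative_def mult.commute[of _ "grad \<phi> x \<bullet> x"])
  moreover have "DERIV (\<lambda>t. \<phi> (t *\<^sub>R x)) 1 :> real m * \<phi> x"
    unfolding homogeneous_poly_scaleR[OF assms] by (auto intro!: derivative_eq_intros)
  ultimately show ?thesis by (rule DERIV_unique)
qed

lemma has_derivative_norm_power:
  fixes x :: "'a::real_inner"
  assumes "x \<noteq> 0"
  shows "((\<lambda>y. norm y ^ k) has_derivative (\<lambda>h. (real k * norm x ^ k / (norm x)\<^sup>2) * (x \<bullet> h))) (at x)"
proof -
  have "((\<lambda>y. norm y ^ k) has_derivative (\<lambda>h. of_nat k * (h \<bullet> sgn x) * norm x ^ (k - 1))) (at x)"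
    by (rule has_derivative_power[OF has_derivative_norm[OF assms]])
  moreover have "of_nat k * (h \<bullet> sgn x) * norm x ^ (k - 1) = (real k * norm x ^ k / (norm x)\<^sup>2) * (x \<bullet> h)" for h
    using assms by (cases k) (simp_all add: sgn_div_norm inner_commute power2_eq_square field_simps)
  ultimately show ?thesis by simp
qed

lemma one_minus_square_pos: "t \<in> {-1<..<1::real} \<Longrightarrow> 1 - t\<^sup>2 > 0"
  by (simp add: abs_square_less_1 abs_less_iff)

lemma C2_real_on_DERIV:
  assumes "C2_real_on S g" and "t \<in> S"
  shows "DERIV g t :> deriv g t" and "DERIV (deriv g) t :> deriv (deriv g) t"
  using assms by (simp_all add: C2_real_on_def DERIV_deriv_iff_real_differentiable)

definition reduced_p_laplacian :: "real \<Rightarrow> real \<Rightarrow> (real \<Rightarrow> real) \<Rightarrow> real \<Rightarrow> real" where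
  "reduced_p_laplacian p k g t =
     (p - 1) * (1 - t\<^sup>2) * deriv (deriv g) t - (k + p - 1) * t * deriv g t"

lemma reduced_p_laplacian_power_solution:
  assumes g': "\<forall>z\<in>{-1<..<1}. deriv g z = C * (1 - z\<^sup>2) powr (-\<alpha>)"
    and p: "p \<noteq> 1" and p_eq: "p = 1 + k / (2 * \<alpha> - 1)"
    and t: "t \<in> {-1<..<1}"
  shows "reduced_p_laplacian p k g t = 0"
proof -
  have pos: "1 - t\<^sup>2 > 0" using one_minus_square_pos[OF t] .
  have "(p - 1) * (2 * \<alpha> - 1) = k" using p p_eq by auto
  then have p\<alpha>: "(p - 1) * 2 * \<alpha> = k + p - 1" by (simp add: algebra_simps)
  have "DERIV (\<lambda>z. C * (1 - z\<^sup>2) powr (-\<alpha>)) t :> C * (- \<alpha> * (1 - t\<^sup>2) powr (- \<alpha> - 1) * (- 2 * t))"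
    by (rule derivative_eq_intros DERIV_fun_powr | (use pos in simp))+
  then have "DERIV (deriv g) t :> C * (- \<alpha> * (1 - t\<^sup>2) powr (- \<alpha> - 1) * (- 2 * t))"
    by (rule has_field_derivative_transform_within_open[where S="{-1<..<1}"]) (use g' t in auto)
  then have g'': "deriv (deriv g) t = C * (- \<alpha> * (1 - t\<^sup>2) powr (- \<alpha> - 1) * (- 2 * t))"
    by (rule DERIV_imp_deriv)
  have pw: "(1 - t\<^sup>2) * (1 - t\<^sup>2) powr (- \<alpha> - 1) = (1 - t\<^sup>2) powr (- \<alpha>)"
    using pos by (simp add: powr_diff field_simps powr_minus)
  have "(p - 1) * (1 - t\<^sup>2) * deriv (deriv g) t
      = (p - 1) * 2 * \<alpha> * t * (C * ((1 - t\<^sup>2) * (1 - t\<^sup>2) powr (- \<alpha> - 1)))"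
    unfolding g'' by (simp add: algebra_simps)
  also have "\<dots> = (p - 1) * 2 * \<alpha> * t * deriv g t"
    unfolding pw g'[rule_format, OF t] ..
  finally have "(p - 1) * (1 - t\<^sup>2) * deriv (deriv g) t = (p - 1) * 2 * \<alpha> * t * deriv g t" .
  then show ?thesis unfolding reduced_p_laplacian_def p\<alpha> by simp
qed

lemma constant_on_if_DERIV_mult_zero:
  fixes q q' :: "real \<Rightarrow> real"
  assumes "convex S"
    and dq: "\<And>t. t \<in> S \<Longrightarrow> DERIV q t :> q' t"
    and zero: "\<And>t. t \<in> S \<Longrightarrow> q t * q' t = 0"
  shows "q constant_on S"
proof -
  have dq2: "DERIV (\<lambda>t. (q t)\<^sup>2) t :> 0" if "t \<in> S" for t
  proof -
    have "DERIV (\<lambda>t. (q t)\<^sup>2) t :> of_nat 2 * (q' t * q t ^ (2 - Suc 0))"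
      by (rule DERIV_power[OF dq[OF that]])
    moreover have "of_nat 2 * (q' t * q t ^ (2 - Suc 0)) = 0"
      using zero[OF that] by (simp add: mult.commute)
    ultimately show ?thesis by (rule DERIV_cong)
  qed
  obtain c where c: "\<forall>t\<in>S. (q t)\<^sup>2 = c"
    using has_field_derivative_zero_constant[OF \<open>convex S\<close> has_field_derivative_at_within[OF dq2]] by blast
  have "q t \<in> {sqrt c, - sqrt c}" if "t \<in> S" for t
  proof -
    have "\<bar>q t\<bar> = sqrt c" using c that real_sqrt_abs[of "q t"] by simp
    then show ?thesis by (auto simp: abs_if split: if_splits)
  qed
  then have "q ` S \<subseteq> {sqrt c, - sqrt c}" by blast
  then have "finite (q ` S)" by (rule finite_subset) simp
  moreover have "continuous_on S q"
    using dq by (meson DERIV_continuous continuous_at_imp_continuous_on)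
  ultimately show ?thesis
    by (intro continuous_finite_range_constant convex_connected \<open>convex S\<close>)
qed

text \<open>The substitution \<open>q = g' (1 - t\<^sup>2) powr \<alpha>\<close> with \<open>\<alpha> = (k + p - 1) / (2 (p - 1))\<close>
  turns the equation into \<open>q q' = 0\<close>.\<close>
lemma reduced_p_laplacian_solutions:
  assumes g: "C2_real_on {-1<..<1} g" and p: "p \<noteq> 1" and k: "k > 0"
    and eq: "\<forall>t\<in>{-1<..<1}. (deriv g t)\<^sup>2 * reduced_p_laplacian p k g t = 0"
  shows "\<exists>C \<alpha>. (\<forall>z\<in>{-1<..<1}. deriv g z = C * (1 - z\<^sup>2) powr (-\<alpha>)) \<and> p = 1 + k / (2 * \<alpha> - 1)"
proof -
  let ?I = "{-1<..<1::real}"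
  define \<alpha> where "\<alpha> = (k + p - 1) / (2 * (p - 1))"
  have "2 * \<alpha> - 1 = k / (p - 1)" using p unfolding \<alpha>_def by (simp add: field_simps)
  then have p_eq: "p = 1 + k / (2 * \<alpha> - 1)" using k p by simp
  define q where "q t = deriv g t * (1 - t\<^sup>2) powr \<alpha>" for t
  define q' where "q' t = (1 - t\<^sup>2) powr (\<alpha> - 1) * reduced_p_laplacian p k g t / (p - 1)" for t
  have dq: "DERIV q t :> q' t" if t: "t \<in> ?I" for t
  proof -
    have pos: "1 - t\<^sup>2 > 0" using one_minus_square_pos[OF t] .
    have hp: "(1 - t\<^sup>2) powr \<alpha> = (1 - t\<^sup>2) * (1 - t\<^sup>2) powr (\<alpha> - 1)"
      using pos by (simp add: powr_diff field_simps powr_minus)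
    have "DERIV q t :> deriv (deriv g) t * (1 - t\<^sup>2) powr \<alpha>
        + deriv g t * (\<alpha> * (1 - t\<^sup>2) powr (\<alpha> - 1) * (- 2 * t))"
      unfolding q_def
      by (rule derivative_eq_intros DERIV_fun_powr C2_real_on_DERIV(2)[OF g t] | (use pos in simp))+
    moreover have "deriv (deriv g) t * (1 - t\<^sup>2) powr \<alpha> + deriv g t * (\<alpha> * (1 - t\<^sup>2) powr (\<alpha> - 1) * (- 2 * t))
        = (1 - t\<^sup>2) powr (\<alpha> - 1) * ((1 - t\<^sup>2) * deriv (deriv g) t - 2 * \<alpha> * t * deriv g t)"
      unfolding hp by (simp add: algebra_simps)
    moreover have "(1 - t\<^sup>2) * deriv (deriv g) t - 2 * \<alpha> * t * deriv g t
        = reduced_p_laplacian p k g t / (p - 1)"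
      using p unfolding reduced_p_laplacian_def \<alpha>_def by (simp add: field_simps)
    ultimately show ?thesis unfolding q'_def by simp
  qed
  have "q t * q' t = 0" if "t \<in> ?I" for t
  proof -
    have "deriv g t * reduced_p_laplacian p k g t = 0"
      using eq that by (simp add: power2_eq_square)
    then show ?thesis unfolding q_def q'_def by force
  qed
  with dq have "q constant_on ?I"
    by (intro constant_on_if_DERIV_mult_zero) auto
  then obtain C where C: "\<forall>t\<in>?I. q t = C"
    unfolding constant_on_def by blast
  have "deriv g t = C * (1 - t\<^sup>2) powr (-\<alpha>)" if t: "t \<in> ?I" for t
    using C t one_minus_square_pos[OF t] unfolding q_def by (simp add: powr_minus field_simps)
  with p_eq show ?thesis by blast
qed

lemma reduced_p_laplacian_zero_iff:
  assumes "C2_real_on {-1<..<1} g" and "p \<noteq> 1" and "k > 0"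
  shows "(\<forall>t\<in>{-1<..<1}. (deriv g t)\<^sup>2 * reduced_p_laplacian p k g t = 0) \<longleftrightarrow>
    (\<exists>C \<alpha>. (\<forall>z\<in>{-1<..<1}. deriv g z = C * (1 - z\<^sup>2) powr (-\<alpha>)) \<and> p = 1 + k / (2 * \<alpha> - 1))"
proof
  assume "\<exists>C \<alpha>. (\<forall>z\<in>{-1<..<1}. deriv g z = C * (1 - z\<^sup>2) powr (-\<alpha>)) \<and> p = 1 + k / (2 * \<alpha> - 1)"
  then show "\<forall>t\<in>{-1<..<1}. (deriv g t)\<^sup>2 * reduced_p_laplacian p k g t = 0"
    using reduced_p_laplacian_power_solution[OF _ assms(2)] by fastforce
qed (rule reduced_p_laplacian_solutions[OF assms])

locale eiconal_harmonic_poly =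
  fixes m :: nat and \<phi> :: "real^'n \<Rightarrow> real"
  assumes degree_pos: "m \<ge> 1"
    and homogeneous: "homogeneous_poly m \<phi>"
    and eiconal: "\<forall>x. (norm (grad \<phi> x))\<^sup>2 = (real m)\<^sup>2 * norm x ^ (2 * m - 2)"
    and harmonic: "\<forall>x. laplacian \<phi> x = 0"
begin

lemma real_polynomial_function_phi: "real_polynomial_function \<phi>"
  using homogeneous_poly_imp_real_polynomial_function[OF homogeneous] .

lemma has_derivative_phi: "(\<phi> has_derivative (\<lambda>h. grad \<phi> x \<bullet> h)) (at x)"
  using has_derivative_real_polynomial_function[OF real_polynomial_function_phi] .

lemma real_polynomial_function_grad_phi: "real_polynomial_function (\<lambda>x. grad \<phi> x $ i)"
  using real_polynomial_function_grad_component[OF real_polynomial_function_phi] .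

definition hess_row :: "'n \<Rightarrow> real^'n \<Rightarrow> real^'n" where
  "hess_row i x = grad (\<lambda>y. grad \<phi> y $ i) x"

lemma has_derivative_grad_phi: "((\<lambda>y. grad \<phi> y $ i) has_derivative (\<lambda>h. hess_row i x \<bullet> h)) (at x)"
  unfolding hess_row_def using has_derivative_real_polynomial_function[OF real_polynomial_function_grad_phi] .

lemma hess_trace_zero: "(\<Sum>i\<in>UNIV. hess_row i x $ i) = 0"
  using harmonic by (simp add: laplacian_def partial2_def hess_row_def grad_def)

lemma continuous_on_phi: "continuous_on A \<phi>"
  using continuous_on_real_polynomial_function[OF real_polynomial_function_phi] .

lemma continuous_on_grad_phi: "continuous_on A (grad \<phi>)"
  using continuous_on_vec_lambda[of A "\<lambda>i x. grad \<phi> x $ i"]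
    continuous_on_real_polynomial_function[OF real_polynomial_function_grad_phi] by simp

lemma continuous_on_hess_row: "continuous_on A (hess_row i)"
  using continuous_on_vec_lambda[of A "\<lambda>j x. hess_row i x $ j"]
    continuous_on_real_polynomial_function[OF real_polynomial_function_grad_component[OF real_polynomial_function_grad_phi]]
  by (simp add: hess_row_def)

lemma euler: "grad \<phi> x \<bullet> x = real m * \<phi> x"
  using homogeneous_poly_euler[OF homogeneous] .

lemma eiconal_mult_norm_sq: "(norm (grad \<phi> x))\<^sup>2 * (norm x)\<^sup>2 = (real m)\<^sup>2 * (norm x ^ m)\<^sup>2"
proof -
  have "2 * m - 2 + 2 = 2 * m" using degree_pos by simp
  then have "norm x ^ (2 * m - 2) * (norm x)\<^sup>2 = (norm x ^ m)\<^sup>2"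
    by (metis power_add power_mult mult.commute)
  then show ?thesis using eiconal by (metis mult.assoc)
qed

definition zeta :: "real^'n \<Rightarrow> real" where
  "zeta x = \<phi> x / norm x ^ m"

definition inv_norm_pow :: "real^'n \<Rightarrow> real" where
  "inv_norm_pow x = 1 / norm x ^ m"

definition radial_weight :: "real^'n \<Rightarrow> real" where
  "radial_weight x = real m * \<phi> x / (norm x ^ m * (norm x)\<^sup>2)"

definition dzeta :: "real^'n \<Rightarrow> real^'n" where
  "dzeta x = inv_norm_pow x *\<^sub>R grad \<phi> x - radial_weight x *\<^sub>R x"

definition grad_inv_norm_pow :: "real^'n \<Rightarrow> real^'n" where
  "grad_inv_norm_pow x = (- real m / (norm x ^ m * (norm x)\<^sup>2)) *\<^sub>R x"

definition grad_radial_weight :: "real^'n \<Rightarrow> real^'n" where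
  "grad_radial_weight x = (real m / (norm x ^ m * (norm x)\<^sup>2)) *\<^sub>R grad \<phi> x
     - (real m * (real m + 2) * \<phi> x / (norm x ^ m * ((norm x)\<^sup>2 * (norm x)\<^sup>2))) *\<^sub>R x"

definition dzeta_deriv :: "real^'n \<Rightarrow> 'n \<Rightarrow> real^'n \<Rightarrow> real" where
  "dzeta_deriv x i h = (grad_inv_norm_pow x \<bullet> h) * grad \<phi> x $ i + inv_norm_pow x * (hess_row i x \<bullet> h)
     - (grad_radial_weight x \<bullet> h) * x $ i - radial_weight x * h $ i"

lemma has_derivative_inv_norm_pow:
  assumes "x \<noteq> 0"
  shows "(inv_norm_pow has_derivative (\<lambda>h. grad_inv_norm_pow x \<bullet> h)) (at x)"
proof -
  have "((\<lambda>y. 1 / norm y ^ m) has_derivative (\<lambda>h. - 1 * (inverse (norm x ^ m) *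
      ((real m * norm x ^ m / (norm x)\<^sup>2) * (x \<bullet> h)) * inverse (norm x ^ m)) + 0 / norm x ^ m)) (at x)"
    by (rule has_derivative_divide[OF has_derivative_const has_derivative_norm_power[OF assms]])
      (use assms in simp)
  moreover have "(\<lambda>h. - 1 * (inverse (norm x ^ m) * ((real m * norm x ^ m / (norm x)\<^sup>2) * (x \<bullet> h)) *
      inverse (norm x ^ m)) + 0 / norm x ^ m) = (\<lambda>h. grad_inv_norm_pow x \<bullet> h)"
    using assms by (auto simp: grad_inv_norm_pow_def field_simps power2_eq_square)
  ultimately show ?thesis unfolding inv_norm_pow_def[abs_def] by simp
qed

lemma has_derivative_radial_weight:
  assumes "x \<noteq> 0"
  shows "(radial_weight has_derivative (\<lambda>h. grad_radial_weight x \<bullet> h)) (at x)"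
proof -
  have d: "((\<lambda>y. norm y ^ m * (norm y)\<^sup>2) has_derivative (\<lambda>h. norm x ^ m * ((real 2 * (norm x)\<^sup>2 / (norm x)\<^sup>2) * (x \<bullet> h))
      + (real m * norm x ^ m / (norm x)\<^sup>2) * (x \<bullet> h) * (norm x)\<^sup>2)) (at x)"
    by (rule has_derivative_mult[OF has_derivative_norm_power[OF assms] has_derivative_norm_power[OF assms]])
  have "((\<lambda>y. real m * \<phi> y / (norm y ^ m * (norm y)\<^sup>2)) has_derivative
     (\<lambda>h. - (real m * \<phi> x) * (inverse (norm x ^ m * (norm x)\<^sup>2) * (norm x ^ m * ((real 2 * (norm x)\<^sup>2 / (norm x)\<^sup>2) * (x \<bullet> h))
       + (real m * norm x ^ m / (norm x)\<^sup>2) * (x \<bullet> h) * (norm x)\<^sup>2) * inverse (norm x ^ m * (norm x)\<^sup>2))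
       + (real m * (grad \<phi> x \<bullet> h)) / (norm x ^ m * (norm x)\<^sup>2))) (at x)"
    by (rule has_derivative_divide[OF has_derivative_mult[OF has_derivative_const has_derivative_phi, simplified] d])
      (use assms in simp)
  moreover have "(\<lambda>h. - (real m * \<phi> x) * (inverse (norm x ^ m * (norm x)\<^sup>2) * (norm x ^ m * ((real 2 * (norm x)\<^sup>2 / (norm x)\<^sup>2) * (x \<bullet> h))
       + (real m * norm x ^ m / (norm x)\<^sup>2) * (x \<bullet> h) * (norm x)\<^sup>2) * inverse (norm x ^ m * (norm x)\<^sup>2))
       + (real m * (grad \<phi> x \<bullet> h)) / (norm x ^ m * (norm x)\<^sup>2)) = (\<lambda>h. grad_radial_weight x \<bullet> h)"
    using assms by (auto simp: grad_radial_weight_def inner_diff_left field_simps power2_eq_square)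
  ultimately show ?thesis unfolding radial_weight_def[abs_def] by simp
qed

lemma has_derivative_zeta:
  assumes "x \<noteq> 0"
  shows "(zeta has_derivative (\<lambda>h. dzeta x \<bullet> h)) (at x)"
proof -
  have "((\<lambda>y. \<phi> y * inv_norm_pow y) has_derivative
      (\<lambda>h. \<phi> x * (grad_inv_norm_pow x \<bullet> h) + (grad \<phi> x \<bullet> h) * inv_norm_pow x)) (at x)"
    by (rule has_derivative_mult[OF has_derivative_phi has_derivative_inv_norm_pow[OF assms]])
  moreover have "(\<lambda>h. \<phi> x * (grad_inv_norm_pow x \<bullet> h) + (grad \<phi> x \<bullet> h) * inv_norm_pow x) = (\<lambda>h. dzeta x \<bullet> h)"
    using assms by (auto simp: grad_inv_norm_pow_def dzeta_def inv_norm_pow_def radial_weight_def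
        inner_diff_left field_simps)
  moreover have "(\<lambda>y. \<phi> y * inv_norm_pow y) = zeta" by (auto simp: zeta_def inv_norm_pow_def)
  ultimately show ?thesis by simp
qed

lemma has_derivative_dzeta_component:
  assumes "x \<noteq> 0"
  shows "((\<lambda>y. dzeta y $ i) has_derivative dzeta_deriv x i) (at x)"
proof -
  have "((\<lambda>y. y $ i) has_derivative (\<lambda>h. h $ i)) (at x)"
    by (rule bounded_linear_imp_has_derivative) (rule bounded_linear_vec_nth)
  then have "((\<lambda>y. inv_norm_pow y * grad \<phi> y $ i - radial_weight y * y $ i) has_derivative
     (\<lambda>h. (inv_norm_pow x * (hess_row i x \<bullet> h) + (grad_inv_norm_pow x \<bullet> h) * grad \<phi> x $ i)
        - (radial_weight x * h $ i + (grad_radial_weight x \<bullet> h) * x $ i))) (at x)"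
    by (intro has_derivative_diff has_derivative_mult has_derivative_inv_norm_pow has_derivative_radial_weight
        has_derivative_grad_phi assms)
  moreover have "(\<lambda>h. (inv_norm_pow x * (hess_row i x \<bullet> h) + (grad_inv_norm_pow x \<bullet> h) * grad \<phi> x $ i)
        - (radial_weight x * h $ i + (grad_radial_weight x \<bullet> h) * x $ i)) = dzeta_deriv x i"
    by (auto simp: dzeta_deriv_def fun_eq_iff algebra_simps)
  moreover have "(\<lambda>y. inv_norm_pow y * grad \<phi> y $ i - radial_weight y * y $ i) = (\<lambda>y. dzeta y $ i)"
    by (auto simp: dzeta_def)
  ultimately show ?thesis by simp
qed

lemma continuous_on_dzeta: "continuous_on (- {0}) dzeta"
  unfolding dzeta_def inv_norm_pow_def radial_weight_def
  by (intro continuous_intros continuous_on_grad_phi continuous_on_phi) auto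

lemma continuous_on_dzeta_deriv: "continuous_on (- {0}) (\<lambda>x. dzeta_deriv x i h)"
  unfolding dzeta_deriv_def grad_inv_norm_pow_def grad_radial_weight_def inv_norm_pow_def radial_weight_def
  by (intro continuous_intros continuous_on_grad_phi continuous_on_phi continuous_on_hess_row) auto

lemma norm_dzeta_sq:
  assumes "x \<noteq> 0"
  shows "(norm (dzeta x))\<^sup>2 = (real m)\<^sup>2 * (1 - (zeta x)\<^sup>2) / (norm x)\<^sup>2"
proof -
  have R: "norm x > 0" using assms by simp
  have G: "(norm (grad \<phi> x))\<^sup>2 = (real m)\<^sup>2 * (norm x ^ m)\<^sup>2 / (norm x)\<^sup>2"
    using eiconal_mult_norm_sq[of x] R by (simp add: field_simps)
  have "(norm (dzeta x))\<^sup>2 = (inv_norm_pow x)\<^sup>2 * (norm (grad \<phi> x))\<^sup>2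
      - 2 * inv_norm_pow x * radial_weight x * (grad \<phi> x \<bullet> x) + (radial_weight x)\<^sup>2 * (norm x)\<^sup>2"
    unfolding power2_norm_eq_inner
    by (simp add: dzeta_def inner_diff_left inner_diff_right inner_commute algebra_simps power2_eq_square)
  also have "\<dots> = (real m)\<^sup>2 * (1 - (zeta x)\<^sup>2) / (norm x)\<^sup>2"
    unfolding G euler using R
    by (simp add: inv_norm_pow_def radial_weight_def zeta_def field_simps power2_eq_square)
  finally show ?thesis .
qed

lemma dzeta_orthogonal: "x \<noteq> 0 \<Longrightarrow> dzeta x \<bullet> x = 0"
  by (simp add: dzeta_def inner_diff_left euler inv_norm_pow_def radial_weight_def
      power2_norm_eq_inner[symmetric] field_simps power2_eq_square)

lemma dzeta_divergence:
  assumes "x \<noteq> 0"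
  shows "(\<Sum>i\<in>UNIV. dzeta_deriv x i (axis i 1))
    = - real m * (real CARD('n) + real m - 2) * zeta x / (norm x)\<^sup>2"
proof -
  have R: "norm x > 0" using assms by simp
  have "(\<Sum>i\<in>UNIV. dzeta_deriv x i (axis i 1)) = (\<Sum>i\<in>UNIV. grad_inv_norm_pow x $ i * grad \<phi> x $ i
      + inv_norm_pow x * hess_row i x $ i - grad_radial_weight x $ i * x $ i - radial_weight x)"
    by (simp add: dzeta_deriv_def inner_axis)
  also have "\<dots> = grad_inv_norm_pow x \<bullet> grad \<phi> x
      + inv_norm_pow x * (\<Sum>i\<in>UNIV. hess_row i x $ i) - grad_radial_weight x \<bullet> x - real CARD('n) * radial_weight x"
    by (simp add: sum.distrib sum_subtractf sum_distrib_left inner_vec_def)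
  also have "\<dots> = - real m * (real CARD('n) + real m - 2) * zeta x / (norm x)\<^sup>2"
    unfolding hess_trace_zero using R
    by (simp add: grad_inv_norm_pow_def grad_radial_weight_def inner_diff_left inner_commute[of x "grad \<phi> x"]
        euler radial_weight_def zeta_def power2_norm_eq_inner[symmetric] field_simps power2_eq_square)
  finally show ?thesis .
qed

lemma zeta_normalize: "x \<noteq> 0 \<Longrightarrow> zeta (x /\<^sub>R norm x) = zeta x"
  using homogeneous_poly_scaleR[OF homogeneous, of "inverse (norm x)" x]
  by (simp add: zeta_def power_inverse field_simps)

lemma continuous_on_zeta: "continuous_on (- {0}) zeta"
  by (subst continuous_on_eq_continuous_at) (auto intro: has_derivative_continuous[OF has_derivative_zeta])

lemma zeta_extremum_sq_eq_1:
  assumes "x \<noteq> 0" and "(\<forall>y\<in>- {0}. zeta y \<le> zeta x) \<or> (\<forall>y\<in>- {0}. zeta x \<le> zeta y)"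
  shows "(zeta x)\<^sup>2 = 1"
proof -
  have "(\<lambda>h. dzeta x \<bullet> h) = (\<lambda>h. 0)"
    by (rule differential_zero_maxmin[of x "- {0}"]) (use assms has_derivative_zeta in auto)
  then have "(norm (dzeta x))\<^sup>2 = 0" by (metis power2_norm_eq_inner)
  then show ?thesis using norm_dzeta_sq[OF assms(1)] assms(1) degree_pos by simp
qed

lemma zeta_constant_imp_zero:
  assumes "CARD('n) \<ge> 2" and const: "\<forall>y\<in>- {0}. zeta y = c"
  shows "c = 0"
proof -
  obtain i :: 'n where True by simp
  define x :: "real^'n" where "x = axis i 1"
  have x: "x \<noteq> 0" by (simp add: x_def axis_eq_0_iff)
  have dzeta_0: "dzeta y = 0" if "y \<noteq> 0" for y
  proof -
    have "(zeta has_derivative (\<lambda>h. 0)) (at y)"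
      by (rule has_derivative_transform_within_open[where f="\<lambda>y. c" and s="- {0}"]) (use that const in auto)
    then have "(\<lambda>h. dzeta y \<bullet> h) = (\<lambda>h. 0)"
      using has_derivative_unique has_derivative_zeta[OF that] by blast
    then show ?thesis by (metis inner_eq_zero_iff)
  qed
  have "dzeta_deriv x j = (\<lambda>h. 0)" for j
  proof -
    have "((\<lambda>y. dzeta y $ j) has_derivative (\<lambda>h. 0)) (at x)"
      by (rule has_derivative_transform_within_open[where f="\<lambda>y. 0" and s="- {0}"]) (use x dzeta_0 in auto)
    then show ?thesis using has_derivative_unique has_derivative_dzeta_component[OF x] by blast
  qed
  then have "real m * (real CARD('n) + real m - 2) * zeta x / (norm x)\<^sup>2 = 0"
    using dzeta_divergence[OF x] by simp
  then show ?thesis using degree_pos assms x const by simp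
qed

definition \<Omega> :: "(real^'n) set" where
  "\<Omega> = {x. x \<noteq> 0 \<and> \<bar>\<phi> x\<bar> < norm x ^ m}"

lemma open_\<Omega>: "open \<Omega>"
proof -
  have "\<Omega> = {x. \<bar>\<phi> x\<bar> < norm x ^ m}"
    unfolding \<Omega>_def using degree_pos by (auto simp: power_0_left)
  moreover have "open {x. \<bar>\<phi> x\<bar> < norm x ^ m}"
    by (rule open_Collect_less) (intro continuous_intros continuous_on_phi)+
  ultimately show ?thesis by simp
qed

lemma \<Omega>_nonzero: "x \<in> \<Omega> \<Longrightarrow> x \<noteq> 0"
  by (simp add: \<Omega>_def)

lemma zeta_\<Omega>:
  assumes "x \<in> \<Omega>"
  shows "zeta x \<in> {-1<..<1}"
proof -
  have "norm x ^ m > 0" using assms by (simp add: \<Omega>_def)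
  then have "\<bar>zeta x\<bar> < 1" using assms by (simp add: \<Omega>_def zeta_def abs_divide)
  then show ?thesis by (simp add: abs_less_iff)
qed

text \<open>Extrema of \<open>\<zeta>\<close> on the unit sphere are extrema on \<open>- {0}\<close> by homogeneity, hence
  critical points, where \<open>\<zeta>\<^sup>2 = 1\<close>; they differ because \<open>\<zeta>\<close> is not constant.\<close>
lemma zeta_sphere_values_plus_minus_1:
  assumes n: "CARD('n) \<ge> 2"
  shows "\<exists>xM\<in>sphere 0 1. \<exists>xm\<in>sphere 0 1. zeta xM = 1 \<and> zeta xm = -1"
proof -
  let ?S = "sphere (0::real^'n) 1"
  have cont: "continuous_on ?S zeta" by (rule continuous_on_subset[OF continuous_on_zeta]) auto
  obtain i :: 'n where True by simp
  have "axis i 1 \<in> ?S" by (simp add: norm_axis_1)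
  then have ne: "?S \<noteq> {}" by blast
  obtain xM where xM: "xM \<in> ?S" "\<forall>y\<in>?S. zeta y \<le> zeta xM"
    using continuous_attains_sup[OF compact_sphere ne cont] by blast
  obtain xm where xm: "xm \<in> ?S" "\<forall>y\<in>?S. zeta xm \<le> zeta y"
    using continuous_attains_inf[OF compact_sphere ne cont] by blast
  have le_M: "zeta y \<le> zeta xM" and ge_m: "zeta xm \<le> zeta y" if "y \<in> - {0}" for y
  proof -
    have "y /\<^sub>R norm y \<in> ?S" and "zeta (y /\<^sub>R norm y) = zeta y"
      using that zeta_normalize by auto
    then show "zeta y \<le> zeta xM" and "zeta xm \<le> zeta y"
      using xM(2) xm(2) by (metis, metis)
  qed
  have "xM \<noteq> 0" "xm \<noteq> 0" using xM(1) xm(1) by auto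
  then have M: "(zeta xM)\<^sup>2 = 1" and m: "(zeta xm)\<^sup>2 = 1"
    using le_M ge_m by (blast intro: zeta_extremum_sq_eq_1)+
  have "zeta xM \<noteq> zeta xm"
  proof
    assume "zeta xM = zeta xm"
    then have "\<forall>y\<in>- {0}. zeta y = zeta xM"
      using le_M ge_m by (simp add: order_antisym)
    then show False using zeta_constant_imp_zero[OF n] M by fastforce
  qed
  moreover have "zeta xm \<le> zeta xM" using xm xM by auto
  ultimately have "zeta xM = 1" "zeta xm = -1" using M m by (auto simp: power2_eq_1_iff)
  with xM(1) xm(1) show ?thesis by blast
qed

lemma zeta_surjective:
  assumes n: "CARD('n) \<ge> 2" and t: "t \<in> {-1<..<1}"
  shows "\<exists>x\<in>\<Omega>. zeta x = t"
proof -
  let ?S = "sphere (0::real^'n) 1"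
  obtain xM xm where x: "xM \<in> ?S" "xm \<in> ?S" and "zeta xM = 1" "zeta xm = -1"
    using zeta_sphere_values_plus_minus_1[OF n] by blast
  then have "zeta xm \<le> t" "t \<le> zeta xM" using t by auto
  moreover have "zeta xm \<in> zeta ` ?S" "zeta xM \<in> zeta ` ?S" using x by blast+
  moreover have "connected (zeta ` ?S)"
    using connected_continuous_image[OF continuous_on_subset[OF continuous_on_zeta] connected_sphere] n
    by auto
  ultimately have "t \<in> zeta ` ?S"
    unfolding connected_iff_interval by blast
  then obtain x where x: "x \<in> ?S" "zeta x = t" by blast
  then have "\<bar>\<phi> x\<bar> < norm x ^ m" using t by (auto simp: zeta_def abs_less_iff)
  moreover have "x \<noteq> 0" using x(1) by auto
  ultimately show ?thesis using x(2) unfolding \<Omega>_def by blast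
qed

end

lemma radial_p_laplacian_identity:
  fixes r q k n z g1 g2 p m1 :: real
  assumes "r > 0" and "q = k\<^sup>2 * (1 - z\<^sup>2) / r\<^sup>2" and "n = k * m1 + 2"
  shows "g1\<^sup>2 * q * (g2 * q + g1 * (- k * (n + k - 2) * z / r\<^sup>2))
     + (p - 2) / 2 * (g1 * ((k\<^sup>2 * (2 * g1 * g2 * (1 - z\<^sup>2) + g1\<^sup>2 * (- 2 * z)) / r\<^sup>2) * q))
   = q * (k\<^sup>2 / r\<^sup>2) * g1\<^sup>2 * ((p - 1) * (1 - z\<^sup>2) * g2 - (m1 + p - 1) * z * g1)"
  unfolding assms(2,3) using assms(1) by (simp add: field_simps power2_eq_square)

locale eiconal_harmonic_composition = eiconal_harmonic_poly m \<phi> for m and \<phi> :: "real^'n \<Rightarrow> real" +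
  fixes g :: "real \<Rightarrow> real" and m1 :: nat
  assumes g_C2: "C2_real_on {-1<..<1} g"
    and dimension: "CARD('n) = m * m1 + 2"
begin

definition u :: "real^'n \<Rightarrow> real" where
  "u x = g (zeta x)"

lemma has_derivative_u:
  assumes "x \<in> \<Omega>"
  shows "(u has_derivative (\<lambda>h. (deriv g (zeta x) *\<^sub>R dzeta x) \<bullet> h)) (at x)"
proof -
  have "(u has_derivative (\<lambda>h. (dzeta x \<bullet> h) * deriv g (zeta x))) (at x)"
    unfolding u_def[abs_def]
    by (rule DERIV_compose_FDERIV[OF C2_real_on_DERIV(1)[OF g_C2 zeta_\<Omega>[OF assms]]
          has_derivative_zeta[OF \<Omega>_nonzero[OF assms]]])
  then show ?thesis by (simp add: mult.commute)
qed

lemma grad_u: "x \<in> \<Omega> \<Longrightarrow> grad u x = deriv g (zeta x) *\<^sub>R dzeta x"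
  using has_derivative_u grad_eqI by blast

definition grad_u_deriv :: "real^'n \<Rightarrow> 'n \<Rightarrow> real^'n \<Rightarrow> real" where
  "grad_u_deriv x i h = deriv (deriv g) (zeta x) * (dzeta x \<bullet> h) * dzeta x $ i + deriv g (zeta x) * dzeta_deriv x i h"

lemma has_derivative_grad_u:
  assumes "x \<in> \<Omega>"
  shows "((\<lambda>y. grad u y $ i) has_derivative grad_u_deriv x i) (at x)"
proof -
  note x = \<Omega>_nonzero[OF assms]
  have "((\<lambda>y. deriv g (zeta y) * dzeta y $ i) has_derivative
      (\<lambda>h. deriv g (zeta x) * dzeta_deriv x i h + (dzeta x \<bullet> h * deriv (deriv g) (zeta x)) * dzeta x $ i)) (at x)"
    by (rule has_derivative_mult[OF DERIV_compose_FDERIV[OF C2_real_on_DERIV(2)[OF g_C2 zeta_\<Omega>[OF assms]]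
          has_derivative_zeta[OF x]] has_derivative_dzeta_component[OF x]])
  moreover have "(\<lambda>h. deriv g (zeta x) * dzeta_deriv x i h + (dzeta x \<bullet> h * deriv (deriv g) (zeta x)) * dzeta x $ i)
      = grad_u_deriv x i"
    by (auto simp: grad_u_deriv_def fun_eq_iff)
  ultimately have "((\<lambda>y. deriv g (zeta y) * dzeta y $ i) has_derivative grad_u_deriv x i) (at x)" by simp
  then show ?thesis
    by (rule has_derivative_transform_within_open[OF _ open_\<Omega> assms]) (simp add: grad_u)
qed

lemma partial2_u: "x \<in> \<Omega> \<Longrightarrow> partial2 u i j x = grad_u_deriv x i (axis j 1)"
  unfolding partial2_def using has_derivative_grad_u frechet_derivative_at by metis

lemma laplacian_u:
  assumes "x \<in> \<Omega>"
  shows "laplacian u x = deriv (deriv g) (zeta x) * (norm (dzeta x))\<^sup>2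
    + deriv g (zeta x) * (- real m * (real CARD('n) + real m - 2) * zeta x / (norm x)\<^sup>2)"
proof -
  have "laplacian u x = (\<Sum>i\<in>UNIV. deriv (deriv g) (zeta x) * (dzeta x $ i * dzeta x $ i)
      + deriv g (zeta x) * dzeta_deriv x i (axis i 1))"
    unfolding laplacian_def using partial2_u[OF assms] by (simp add: grad_u_deriv_def inner_axis mult.assoc)
  also have "\<dots> = deriv (deriv g) (zeta x) * (dzeta x \<bullet> dzeta x)
      + deriv g (zeta x) * (\<Sum>i\<in>UNIV. dzeta_deriv x i (axis i 1))"
    by (simp add: sum.distrib sum_distrib_left inner_vec_def)
  finally show ?thesis using dzeta_divergence[OF \<Omega>_nonzero[OF assms]] by (simp add: power2_norm_eq_inner)
qed

definition grad_sq_profile :: "real \<Rightarrow> real" where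
  "grad_sq_profile t = (deriv g t)\<^sup>2 * (1 - t\<^sup>2)"

definition grad_sq_profile_deriv :: "real \<Rightarrow> real" where
  "grad_sq_profile_deriv t = 2 * deriv g t * deriv (deriv g) t * (1 - t\<^sup>2) + (deriv g t)\<^sup>2 * (- 2 * t)"

lemma DERIV_grad_sq_profile: "t \<in> {-1<..<1} \<Longrightarrow> DERIV grad_sq_profile t :> grad_sq_profile_deriv t"
  unfolding grad_sq_profile_def[abs_def] grad_sq_profile_deriv_def
  by (auto intro!: derivative_eq_intros C2_real_on_DERIV(2)[OF g_C2] simp: power2_eq_square algebra_simps)

lemma norm_grad_u_sq: "x \<in> \<Omega> \<Longrightarrow> (norm (grad u x))\<^sup>2 = (real m)\<^sup>2 * grad_sq_profile (zeta x) / (norm x)\<^sup>2"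
  using norm_dzeta_sq[OF \<Omega>_nonzero] by (simp add: grad_u grad_sq_profile_def power_mult_distrib)

lemma grad_norm_grad_u_sq:
  assumes "x \<in> \<Omega>"
  shows "grad (\<lambda>y. (norm (grad u y))\<^sup>2) x =
    ((real m)\<^sup>2 * grad_sq_profile_deriv (zeta x) / (norm x)\<^sup>2) *\<^sub>R dzeta x
      - (2 * (real m)\<^sup>2 * grad_sq_profile (zeta x) / ((norm x)\<^sup>2 * (norm x)\<^sup>2)) *\<^sub>R x"
    (is "_ = ?W")
proof (rule grad_eqI)
  note x = \<Omega>_nonzero[OF assms]
  have d1: "((\<lambda>y. (real m)\<^sup>2 * grad_sq_profile (zeta y)) has_derivative
      (\<lambda>h. (real m)\<^sup>2 * ((dzeta x \<bullet> h) * grad_sq_profile_deriv (zeta x)))) (at x)"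
    by (rule has_derivative_mult[OF has_derivative_const
          DERIV_compose_FDERIV[OF DERIV_grad_sq_profile[OF zeta_\<Omega>[OF assms]] has_derivative_zeta[OF x]], simplified])
  have "((\<lambda>y. (real m)\<^sup>2 * grad_sq_profile (zeta y) / (norm y)\<^sup>2) has_derivative
    (\<lambda>h. - ((real m)\<^sup>2 * grad_sq_profile (zeta x)) * (inverse ((norm x)\<^sup>2) * ((real 2 * (norm x)\<^sup>2 / (norm x)\<^sup>2) * (x \<bullet> h))
      * inverse ((norm x)\<^sup>2)) + (real m)\<^sup>2 * ((dzeta x \<bullet> h) * grad_sq_profile_deriv (zeta x)) / (norm x)\<^sup>2)) (at x)"
    by (rule has_derivative_divide[OF d1 has_derivative_norm_power[OF x]]) (use x in simp)
  moreover have "(\<lambda>h. - ((real m)\<^sup>2 * grad_sq_profile (zeta x)) * (inverse ((norm x)\<^sup>2) * ((real 2 * (norm x)\<^sup>2 / (norm x)\<^sup>2) * (x \<bullet> h))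
      * inverse ((norm x)\<^sup>2)) + (real m)\<^sup>2 * ((dzeta x \<bullet> h) * grad_sq_profile_deriv (zeta x)) / (norm x)\<^sup>2) = (\<lambda>h. ?W \<bullet> h)"
    using x by (auto simp: inner_diff_left field_simps fun_eq_iff)
  ultimately have "((\<lambda>y. (real m)\<^sup>2 * grad_sq_profile (zeta y) / (norm y)\<^sup>2) has_derivative (\<lambda>h. ?W \<bullet> h)) (at x)" by simp
  then show "((\<lambda>y. (norm (grad u y))\<^sup>2) has_derivative (\<lambda>h. ?W \<bullet> h)) (at x)"
    by (rule has_derivative_transform_within_open[OF _ open_\<Omega> assms]) (simp add: norm_grad_u_sq)
qed

lemma p_laplacian_u:
  assumes "x \<in> \<Omega>"
  shows "p_laplacian p u x = (norm (dzeta x))\<^sup>2 * ((real m)\<^sup>2 / (norm x)\<^sup>2) * (deriv g (zeta x))\<^sup>2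
    * reduced_p_laplacian p m1 g (zeta x)"
proof -
  note x = \<Omega>_nonzero[OF assms]
  have inner: "grad u x \<bullet> grad (\<lambda>y. (norm (grad u y))\<^sup>2) x
      = deriv g (zeta x) * (((real m)\<^sup>2 * grad_sq_profile_deriv (zeta x) / (norm x)\<^sup>2) * (norm (dzeta x))\<^sup>2)"
    unfolding grad_u[OF assms] grad_norm_grad_u_sq[OF assms]
    by (simp add: inner_diff_right dzeta_orthogonal[OF x] power2_norm_eq_inner)
  have norm: "(norm (grad u x))\<^sup>2 = (deriv g (zeta x))\<^sup>2 * (norm (dzeta x))\<^sup>2"
    by (simp add: grad_u[OF assms] power_mult_distrib)
  show ?thesis
    unfolding p_laplacian_def laplacian_u[OF assms] inner norm grad_sq_profile_deriv_def reduced_p_laplacian_def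
    by (rule radial_p_laplacian_identity) (use x norm_dzeta_sq[OF x] dimension in auto)
qed

lemma p_laplacian_u_eq_0_iff:
  assumes "x \<in> \<Omega>"
  shows "p_laplacian p u x = 0 \<longleftrightarrow> (deriv g (zeta x))\<^sup>2 * reduced_p_laplacian p m1 g (zeta x) = 0"
proof -
  note x = \<Omega>_nonzero[OF assms]
  have "(zeta x)\<^sup>2 < 1" using zeta_\<Omega>[OF assms] by (simp add: abs_square_less_1 abs_less_iff)
  then have "(norm (dzeta x))\<^sup>2 > 0" using norm_dzeta_sq[OF x] x degree_pos by simp
  moreover have "(real m)\<^sup>2 / (norm x)\<^sup>2 > 0" using x degree_pos by simp
  ultimately show ?thesis using p_laplacian_u[OF assms] x degree_pos by auto
qed

lemma C2_on_u: "C2_on \<Omega> u"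
  unfolding C2_on_def
proof (intro conjI allI ballI)
  fix x assume x: "x \<in> \<Omega>"
  show "u differentiable at x" using has_derivative_u[OF x] by (rule differentiableI)
  fix i show "(\<lambda>y. grad u y $ i) differentiable at x" using has_derivative_grad_u[OF x] by (rule differentiableI)
next
  fix i j
  have zeta: "continuous_on \<Omega> zeta" "zeta ` \<Omega> \<subseteq> {-1<..<1}"
    using continuous_on_subset[OF continuous_on_zeta] zeta_\<Omega> \<Omega>_nonzero by auto
  have "continuous_on \<Omega> (\<lambda>x. deriv g (zeta x))"
    by (rule continuous_on_compose2[OF _ zeta]) (meson DERIV_isCont continuous_at_imp_continuous_on C2_real_on_DERIV(2)[OF g_C2])
  moreover have "continuous_on \<Omega> (\<lambda>x. deriv (deriv g) (zeta x))"
    by (rule continuous_on_compose2[OF _ zeta]) (use g_C2 in \<open>simp add: C2_real_on_def\<close>)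
  moreover have "continuous_on \<Omega> dzeta"
    by (rule continuous_on_subset[OF continuous_on_dzeta]) (auto dest: \<Omega>_nonzero)
  moreover have "continuous_on \<Omega> (\<lambda>x. dzeta_deriv x i (axis j 1))"
    by (rule continuous_on_subset[OF continuous_on_dzeta_deriv]) (auto dest: \<Omega>_nonzero)
  ultimately have "continuous_on \<Omega> (\<lambda>x. grad_u_deriv x i (axis j 1))"
    unfolding grad_u_deriv_def inner_axis real_inner_1_right
    by (intro continuous_on_add continuous_on_mult continuous_on_component continuous_on_const | assumption)+
  then show "continuous_on \<Omega> (partial2 u i j)"
    by (rule continuous_on_eq) (simp add: partial2_u)
qed

lemma p_harmonic_on_u_iff:
  "p_harmonic_on p \<Omega> u \<longleftrightarrow> (\<forall>t\<in>{-1<..<1}. (deriv g t)\<^sup>2 * reduced_p_laplacian p m1 g t = 0)"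
proof -
  have n: "CARD('n) \<ge> 2" using dimension by simp
  have "{-1<..<1} = zeta ` \<Omega>"
  proof (intro subset_antisym subsetI)
    fix t :: real assume "t \<in> {-1<..<1}"
    then obtain x where "x \<in> \<Omega>" "zeta x = t" using zeta_surjective[OF n] by blast
    then show "t \<in> zeta ` \<Omega>" by blast
  qed (use zeta_\<Omega> in blast)
  have "p_harmonic_on p \<Omega> u \<longleftrightarrow> (\<forall>x\<in>\<Omega>. p_laplacian p u x = 0)"
    using C2_on_u by (simp add: p_harmonic_on_def)
  also have "\<dots> \<longleftrightarrow> (\<forall>t\<in>{-1<..<1}. (deriv g t)\<^sup>2 * reduced_p_laplacian p m1 g t = 0)"
    unfolding \<open>{-1<..<1} = zeta ` \<Omega>\<close> by (simp add: p_laplacian_u_eq_0_iff)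
  finally show ?thesis .
qed

end

theorem proposition4p2:
  fixes m m1 :: nat and \<phi> :: "real^'n \<Rightarrow> real" and g :: "real \<Rightarrow> real" and p :: real
  assumes "m \<ge> 1" and "m1 \<ge> 1"
    and "CARD('n) = m * m1 + 2"
    and "homogeneous_poly m \<phi>"
    and "\<forall>x. (norm (grad \<phi> x))\<^sup>2 = (real m)\<^sup>2 * norm x ^ (2 * m - 2)"
    and "\<forall>x. laplacian \<phi> x = 0"
    and "C2_real_on {-1<..<1} g"
    and "p \<noteq> 1"
  shows "p_harmonic_on p {x. x \<noteq> 0 \<and> \<bar>\<phi> x\<bar> < norm x ^ m} (\<lambda>x. g (\<phi> x / norm x ^ m))
     \<longleftrightarrow> (\<exists>C \<alpha>::real. (\<forall>z\<in>{-1<..<1}. deriv g z = C * (1 - z\<^sup>2) powr (-\<alpha>))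
              \<and> p = 1 + real m1 / (2 * \<alpha> - 1))"
proof -
  interpret eiconal_harmonic_composition m \<phi> g m1
    by unfold_locales (use assms in auto)
  have "{x. x \<noteq> 0 \<and> \<bar>\<phi> x\<bar> < norm x ^ m} = \<Omega>"
    by (simp add: \<Omega>_def)
  moreover have "(\<lambda>x. g (\<phi> x / norm x ^ m)) = u"
    by (simp add: u_def[abs_def] zeta_def[abs_def])
  ultimately show ?thesis
    using p_harmonic_on_u_iff reduced_p_laplacian_zero_iff[OF assms(7,8), of "real m1"] assms(2)
    by simp
qed

end
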